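(* Assume $0<\beta\le\alpha<\sqrt n$ and $e\in\mathbb{R}^n$ satisfies $\|e\|=\sqrt n$. Let $\bar x$ be any point of $\partial K_e(\alpha)$ other than the origin. Assume $v\ne0$ lies in the tangent space to $\partial K_e(\alpha)$ at $\bar x$, and also lies in the tangent space to $\partial K_e(\beta)$ at some point other than the origin. Then the angle $\theta$ between $\bar x$ and $v$ satisfies $|\cos\theta|\le\beta/\alpha$.
   Context: $\mathbb{R}^n$ carries the dot product and Euclidean norm. For $0<\gamma<\sqrt n$, $K_e(\gamma)=\{x:e^Tx\ge\gamma\|x\|\}$, and $\partial$ denotes boundary. For $0\ne z\in\partial K_e(\gamma)$, the tangent space to $\partial K_e(\gamma)$ at $z$ is $\{u:(e^Tz)(e^Tu)-\gamma^2z^Tu=0\}$ (the tangent space of the quadric $(e^Tx)^2-\gamma^2\|x\|^2=0$ at $z$). *)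

theory Defs
  imports "HOL-Analysis.Analysis"
begin

definition Kcone :: "real^'n \<Rightarrow> real \<Rightarrow> (real^'n) set" where
  "Kcone e \<gamma> = {x. \<gamma> * norm x \<le> e \<bullet> x}"

text \<open>Tangent space to the boundary of K_e(gamma) at a nonzero boundary point z
  (tangent space of the quadric (e^T x)^2 - gamma^2 norm x ^2 = 0 at z).\<close>
definition tangent_space :: "real^'n \<Rightarrow> real \<Rightarrow> real^'n \<Rightarrow> (real^'n) set" where
  "tangent_space e \<gamma> z = {u. (e \<bullet> z) * (e \<bullet> u) - \<gamma>^2 * (z \<bullet> u) = 0}"

definition cos_angle :: "real^'n \<Rightarrow> real^'n \<Rightarrow> real" where
  "cos_angle x v = (x \<bullet> v) / (norm x * norm v)"

end

theory Submission
  imports Defs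
begin

text \<open>At a boundary point x of K_e(alpha) the tangency condition reduces to
  norm x * (e \<bullet> v) = alpha * (x \<bullet> v), so alpha * |cos| = |e \<bullet> v| / norm v.
  The same reduction for tangency to the boundary of K_e(beta) at z, combined with
  Cauchy-Schwarz for z \<bullet> v, bounds |e \<bullet> v| by beta * norm v.\<close>

lemma frontier_Kcone_imp_inner_eq:
  fixes e x :: "real^'n"
  assumes "x \<in> frontier (Kcone e g)"
  shows "e \<bullet> x = g * norm x"
proof -
  have "closed (Kcone e g)" unfolding Kcone_def
    by (rule closed_Collect_le) (auto intro!: continuous_intros)
  with assms have "g * norm x \<le> e \<bullet> x"
    using frontier_subset_closed by (fastforce simp: Kcone_def)
  moreover have "\<not> g * norm x < e \<bullet> x"
  proof
    assume "g * norm x < e \<bullet> x"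
    moreover have "open {y::real^'n. g * norm y < e \<bullet> y}"
      by (rule open_Collect_less) (auto intro!: continuous_intros)
    moreover have "{y::real^'n. g * norm y < e \<bullet> y} \<subseteq> Kcone e g"
      by (auto simp: Kcone_def)
    ultimately have "x \<in> interior (Kcone e g)" by (meson interior_maximal mem_Collect_eq subsetD)
    with assms show False by (simp add: frontier_def)
  qed
  ultimately show ?thesis by linarith
qed

lemma tangent_space_frontier_Kcone:
  fixes e z v :: "real^'n"
  assumes "z \<in> frontier (Kcone e g)" and "g \<noteq> 0" and "v \<in> tangent_space e g z"
  shows "norm z * (e \<bullet> v) = g * (z \<bullet> v)"
proof -
  have "g * (norm z * (e \<bullet> v)) = g * (g * (z \<bullet> v))"
    using assms(3) frontier_Kcone_imp_inner_eq[OF assms(1)]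
    by (simp add: tangent_space_def power2_eq_square algebra_simps)
  with assms(2) show ?thesis by simp
qed

lemma tangent_space_frontier_Kcone_abs_inner_le:
  fixes e z v :: "real^'n"
  assumes "z \<in> frontier (Kcone e g)" and "z \<noteq> 0" and "g > 0" and "v \<in> tangent_space e g z"
  shows "\<bar>e \<bullet> v\<bar> \<le> g * norm v"
proof -
  have "norm z * \<bar>e \<bullet> v\<bar> = g * \<bar>z \<bullet> v\<bar>"
    using tangent_space_frontier_Kcone[OF assms(1) _ assms(4)] assms(3)
    by (metis abs_mult abs_norm_cancel abs_of_pos less_irrefl)
  also have "\<dots> \<le> g * (norm z * norm v)"
    using Cauchy_Schwarz_ineq2 assms(3) by (intro mult_left_mono) auto
  finally have "norm z * \<bar>e \<bullet> v\<bar> \<le> norm z * (g * norm v)" by (simp add: algebra_simps)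
  with assms(2) show ?thesis by simp
qed

theorem lemma5p2:
  fixes e xbar v :: "real^'n" and \<alpha> \<beta> :: real
  assumes "0 < \<beta>" and "\<beta> \<le> \<alpha>" and "\<alpha> < sqrt (real CARD('n))"
    and "norm e = sqrt (real CARD('n))"
    and "xbar \<in> frontier (Kcone e \<alpha>)" and "xbar \<noteq> 0"
    and "v \<noteq> 0" and "v \<in> tangent_space e \<alpha> xbar"
    and "\<exists>z. z \<in> frontier (Kcone e \<beta>) \<and> z \<noteq> 0 \<and> v \<in> tangent_space e \<beta> z"
  shows "\<bar>cos_angle xbar v\<bar> \<le> \<beta> / \<alpha>"
proof -
  have "\<alpha> > 0" using assms(1,2) by linarith
  have "\<bar>e \<bullet> v\<bar> \<le> \<beta> * norm v"
    using assms(1,9) tangent_space_frontier_Kcone_abs_inner_le by blast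
  have "\<alpha> * \<bar>xbar \<bullet> v\<bar> = norm xbar * \<bar>e \<bullet> v\<bar>"
    using tangent_space_frontier_Kcone[OF assms(5) _ assms(8)] \<open>\<alpha> > 0\<close>
    by (metis abs_mult abs_norm_cancel abs_of_pos less_irrefl)
  also have "\<dots> \<le> norm xbar * (\<beta> * norm v)"
    using \<open>\<bar>e \<bullet> v\<bar> \<le> \<beta> * norm v\<close> by (simp add: mult_left_mono)
  finally show ?thesis
    using assms(6,7) \<open>\<alpha> > 0\<close> by (simp add: cos_angle_def abs_divide divide_simps algebra_simps)
qed

end
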